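(* Let $n\geq 4$, let $S$ be the set of all $3$-cycles in $S_n$, and let $CAG_n=\mathrm{Cay}(A_n,S)$. Then the map $h:\alpha\mapsto\alpha^{-1}$ ($\alpha\in A_n$) is an automorphism of the graph $CAG_n$. In particular, $CAG_n$ is not a normal Cayley graph, i.e. $R(A_n)$ is not a normal subgroup of $\mathrm{Aut}(CAG_n)$.
   Context: For a finite group $\Gamma$ and a subset $T\subseteq\Gamma$ with $e\notin T$ and $T=T^{-1}$, the Cayley graph $\mathrm{Cay}(\Gamma,T)$ is the undirected graph with vertex set $\Gamma$ and edge set $\{\{\gamma,t\gamma\}\mid \gamma\in\Gamma, t\in T\}$. The right regular representation $R(\Gamma)=\{r_\gamma: x\mapsto x\gamma\mid\gamma\in\Gamma\}$ is a subgroup of $\mathrm{Aut}(\mathrm{Cay}(\Gamma,T))$; the Cayley graph is called normal if $R(\Gamma)$ is a normal subgroup of $\mathrm{Aut}(\mathrm{Cay}(\Gamma,T))$. *)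

theory Defs
  imports "HOL-Algebra.Sym_Groups" "HOL-Algebra.Bij"
begin

definition cayley_adj :: "('a, 'b) monoid_scheme \<Rightarrow> 'a set \<Rightarrow> 'a \<Rightarrow> 'a \<Rightarrow> bool" where
  "cayley_adj G T x y \<longleftrightarrow> x \<in> carrier G \<and> y \<in> carrier G \<and>
     ((\<exists>t\<in>T. y = t \<otimes>\<^bsub>G\<^esub> x) \<or> (\<exists>t\<in>T. x = t \<otimes>\<^bsub>G\<^esub> y))"

definition cayley_aut :: "('a, 'b) monoid_scheme \<Rightarrow> 'a set \<Rightarrow> ('a \<Rightarrow> 'a) monoid" where
  "cayley_aut G T = (BijGroup (carrier G)) \<lparr> carrier :=
     {f \<in> Bij (carrier G). \<forall>x\<in>carrier G. \<forall>y\<in>carrier G.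
        cayley_adj G T x y \<longleftrightarrow> cayley_adj G T (f x) (f y)} \<rparr>"

definition right_reg :: "('a, 'b) monoid_scheme \<Rightarrow> ('a \<Rightarrow> 'a) set" where
  "right_reg G = {(\<lambda>x\<in>carrier G. x \<otimes>\<^bsub>G\<^esub> g) | g. g \<in> carrier G}"

end

theory Submission
  imports Defs
begin

text \<open>Since the connection set of three-cycles is closed under conjugation, inversion maps an edge
  \<open>{x, t x}\<close> to \<open>{x\<inverse>t\<inverse>, x\<inverse>}\<close>, which is again an edge because \<open>x\<inverse> = (x\<inverse> t x) x\<inverse>t\<inverse>\<close>;
  being an involution, inversion is therefore a graph automorphism. If \<open>R(A\<^sub>n)\<close> were
  normal in the automorphism group, conjugating the right translation by \<open>g\<close> with inversion would
  give a right translation; but it is the left translation by \<open>g\<inverse>\<close>, and left and right translations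
  agree only for central elements. Hence \<open>A\<^sub>n\<close> would be abelian, which fails for \<open>n \<ge> 4\<close>.\<close>

lemma cayley_aut_mult:
  assumes "f \<in> carrier (cayley_aut G T)" and "g \<in> carrier (cayley_aut G T)"
  shows "f \<otimes>\<^bsub>cayley_aut G T\<^esub> g = compose (carrier G) f g"
  using assms by (simp add: cayley_aut_def BijGroup_def)

lemma cayley_aut_one: "\<one>\<^bsub>cayley_aut G T\<^esub> = (\<lambda>x\<in>carrier G. x)"
  by (simp add: cayley_aut_def BijGroup_def)

lemma involution_in_cayley_aut:
  assumes ext: "h \<in> extensional (carrier G)"
    and closed: "\<And>x. x \<in> carrier G \<Longrightarrow> h x \<in> carrier G"
    and invol: "\<And>x. x \<in> carrier G \<Longrightarrow> h (h x) = x"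
    and adj: "\<And>x y. cayley_adj G T x y \<Longrightarrow> cayley_adj G T (h x) (h y)"
  shows "h \<in> carrier (cayley_aut G T)"
proof -
  have "bij_betw h (carrier G) (carrier G)"
    by (rule bij_betwI[where g = h]) (auto intro: closed invol)
  then have "h \<in> Bij (carrier G)"
    using ext by (simp add: Bij_def)
  moreover have "cayley_adj G T x y \<longleftrightarrow> cayley_adj G T (h x) (h y)"
    if "x \<in> carrier G" and "y \<in> carrier G" for x y
    using adj[of "h x" "h y"] adj[of x y] invol that by auto
  ultimately show ?thesis
    by (simp add: cayley_aut_def)
qed

lemma (in group) cayley_adj_inv:
  assumes conj: "\<And>g t. g \<in> carrier G \<Longrightarrow> t \<in> T \<Longrightarrow> g \<otimes> t \<otimes> inv g \<in> T"
    and T: "T \<subseteq> carrier G"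
    and adj: "cayley_adj G T x y"
  shows "cayley_adj G T (inv x) (inv y)"
proof -
  have edge: "\<exists>s\<in>T. inv x = s \<otimes> inv y"
    if x: "x \<in> carrier G" and y: "y \<in> carrier G" and t: "t \<in> T" and e: "y = t \<otimes> x" for x y t
  proof
    have tG: "t \<in> carrier G" using t T by blast
    show "inv y \<otimes> t \<otimes> inv (inv y) \<in> T" using conj[OF inv_closed[OF y] t] .
    have "inv y = inv x \<otimes> inv t" using e x tG by (simp add: inv_mult_group)
    then show "inv x = inv y \<otimes> t \<otimes> inv (inv y) \<otimes> inv y"
      using x y tG by (simp add: m_assoc)
  qed
  show ?thesis
    using adj edge[of x y] edge[of y x] unfolding cayley_adj_def by auto
qed

lemma (in group) inversion_in_cayley_aut:
  assumes "\<And>g t. g \<in> carrier G \<Longrightarrow> t \<in> T \<Longrightarrow> g \<otimes> t \<otimes> inv g \<in> T"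
    and "T \<subseteq> carrier G"
  shows "(\<lambda>x\<in>carrier G. inv x) \<in> carrier (cayley_aut G T)"
proof (rule involution_in_cayley_aut)
  fix x y
  assume adj: "cayley_adj G T x y"
  then have "x \<in> carrier G" and "y \<in> carrier G" by (simp_all add: cayley_adj_def)
  with cayley_adj_inv[OF assms adj]
  show "cayley_adj G T ((\<lambda>x\<in>carrier G. inv x) x) ((\<lambda>x\<in>carrier G. inv x) y)" by simp
qed auto

lemma (in group) inversion_conj_right_translation:
  assumes "g \<in> carrier G"
  shows "compose (carrier G) (compose (carrier G) (\<lambda>x\<in>carrier G. inv x) (\<lambda>x\<in>carrier G. x \<otimes> g))
           (\<lambda>x\<in>carrier G. inv x) = (\<lambda>x\<in>carrier G. inv g \<otimes> x)"
  using assms by (auto simp: compose_def inv_mult_group fun_eq_iff)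

lemma (in group) comm_group_if_right_reg_normal:
  assumes h: "(\<lambda>x\<in>carrier G. inv x) \<in> carrier (cayley_aut G T)"
    and normal: "right_reg G \<lhd> cayley_aut G T"
  shows "comm_group G"
proof -
  interpret A: normal "right_reg G" "cayley_aut G T" by (rule normal)
  define h where "h = (\<lambda>x\<in>carrier G. inv x)"
  have hA: "h \<in> carrier (cayley_aut G T)" using h by (simp add: h_def)
  have "h \<otimes>\<^bsub>cayley_aut G T\<^esub> h = \<one>\<^bsub>cayley_aut G T\<^esub>"
    unfolding cayley_aut_mult[OF hA hA] cayley_aut_one by (auto simp: h_def compose_def fun_eq_iff)
  then have inv_h: "inv\<^bsub>cayley_aut G T\<^esub> h = h" using A.inv_equality hA by blast
  have central: "inv g \<otimes> x = x \<otimes> inv g" if g: "g \<in> carrier G" and x: "x \<in> carrier G" for g x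
  proof -
    define r where "r = (\<lambda>x\<in>carrier G. x \<otimes> g)"
    have rR: "r \<in> right_reg G" using g by (auto simp: right_reg_def r_def)
    then have rA: "r \<in> carrier (cayley_aut G T)" using A.subset by blast
    have "h \<otimes>\<^bsub>cayley_aut G T\<^esub> r \<otimes>\<^bsub>cayley_aut G T\<^esub> h \<in> right_reg G"
      using A.inv_op_closed1[OF hA rR] by (simp only: inv_h)
    moreover have "h \<otimes>\<^bsub>cayley_aut G T\<^esub> r \<otimes>\<^bsub>cayley_aut G T\<^esub> h
        = compose (carrier G) (compose (carrier G) h r) h"
      using hA rA A.m_closed[OF hA rA] by (simp add: cayley_aut_mult)
    ultimately have "(\<lambda>x\<in>carrier G. inv g \<otimes> x) \<in> right_reg G"
      using inversion_conj_right_translation[OF g] by (simp add: h_def r_def)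
    then obtain k where k: "k \<in> carrier G"
      and lr: "(\<lambda>x\<in>carrier G. inv g \<otimes> x) = (\<lambda>x\<in>carrier G. x \<otimes> k)"
      by (auto simp: right_reg_def)
    have "inv g = k" using fun_cong[OF lr, of \<one>] g k by simp
    then show ?thesis using fun_cong[OF lr, of x] x by simp
  qed
  show ?thesis
  proof (rule group_comm_groupI)
    fix x y assume "x \<in> carrier G" and "y \<in> carrier G"
    then show "x \<otimes> y = y \<otimes> x" using central[of "inv x" y] by simp
  qed
qed

lemma three_cycles_conj_closed:
  assumes t: "t \<in> three_cycles n" and p: "p permutes {1..n}"
  shows "p \<circ> t \<circ> inv' p \<in> three_cycles n"
proof -
  obtain cs where cs: "t = cycle_of_list cs" "cycle cs" "length cs = 3" "set cs \<subseteq> {1..n}"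
    using t by auto
  have "bij p" using p permutes_bij by blast
  then have "p \<circ> t \<circ> inv' p = cycle_of_list (map p cs)"
    using conjugation_of_cycle[OF cs(2)] cs(1) by simp
  moreover have "cycle (map p cs)"
    using cs(2) \<open>bij p\<close> by (simp add: distinct_map bij_is_inj inj_on_subset[OF _ subset_UNIV])
  moreover have "set (map p cs) \<subseteq> {1..n}"
    using cs(4) p permutes_in_image by fastforce
  moreover have "length (map p cs) = 3" using cs(3) by simp
  ultimately show ?thesis by blast
qed

lemma alt_group_three_cycles_conj_closed:
  assumes "g \<in> carrier (alt_group n)" and "t \<in> three_cycles n"
  shows "g \<otimes>\<^bsub>alt_group n\<^esub> t \<otimes>\<^bsub>alt_group n\<^esub> inv\<^bsub>alt_group n\<^esub> g \<in> three_cycles n"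
  using assms three_cycles_conj_closed
  by (simp add: alt_group_mult alt_group_inv_equality alt_group_carrier)

lemma alt_group_not_comm:
  assumes "n \<ge> 4"
  shows "\<not> comm_group (alt_group n)"
proof
  assume "comm_group (alt_group n)"
  then interpret A: comm_group "alt_group n" .
  define c :: "nat \<Rightarrow> nat" where "c = cycle_of_list [1, 2, 3]"
  define d :: "nat \<Rightarrow> nat" where "d = cycle_of_list [1, 2, 4]"
  have three_cycle: "cycle_of_list cs \<in> three_cycles n"
    if "cycle cs" and "length cs = 3" and "set cs \<subseteq> {1..n}" for cs
    using that by blast
  have "c \<in> three_cycles n" unfolding c_def using assms by (intro three_cycle) auto
  moreover have "d \<in> three_cycles n" unfolding d_def using assms by (intro three_cycle) auto
  ultimately have "c \<in> carrier (alt_group n)" and "d \<in> carrier (alt_group n)"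
    using three_cycles_incl by blast+
  then have "c \<circ> d = d \<circ> c" using A.m_comm unfolding alt_group_mult by blast
  then have "c (d 1) = d (c 1)" by (metis comp_apply)
  moreover have "c (d 1) = 3" and "d (c 1) = 4"
    by (simp_all add: c_def d_def transpose_def)
  ultimately show False by simp
qed

theorem theorem2p1:
  fixes n :: nat
  assumes "n \<ge> 4"
  shows "(\<lambda>\<alpha>\<in>carrier (alt_group n). inv\<^bsub>alt_group n\<^esub> \<alpha>)
           \<in> carrier (cayley_aut (alt_group n) (three_cycles n))
         \<and> \<not> (right_reg (alt_group n) \<lhd> cayley_aut (alt_group n) (three_cycles n))"
proof
  interpret A: group "alt_group n" by (rule alt_group_is_group)
  show aut: "(\<lambda>\<alpha>\<in>carrier (alt_group n). inv\<^bsub>alt_group n\<^esub> \<alpha>)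
      \<in> carrier (cayley_aut (alt_group n) (three_cycles n))"
    by (rule A.inversion_in_cayley_aut[OF alt_group_three_cycles_conj_closed three_cycles_incl])
  show "\<not> right_reg (alt_group n) \<lhd> cayley_aut (alt_group n) (three_cycles n)"
    using A.comm_group_if_right_reg_normal[OF aut] alt_group_not_comm[OF assms] by blast
qed

end
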